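(* Let $N\ge 1$ and let $A\subset\Gamma=\mathbb N_0^s$ be a monomial degree reducing universal interpolation set of order $N$. Then $A$ contains every lower set $B\subset\Gamma$ with $1\le \#B\le N$, i.e. \[ A\supseteq \bigcup_{j=1}^N\ \bigcup_{B\in L_j(\Gamma)} B . \]
   Context: $\Pi=\mathbb C[x_1,\dots,x_s]$, $\deg$ is total degree with $\deg 0<0$. For $A\subset\Gamma=\mathbb N_0^s$, $\Pi_A$ is the span of the monomials $x^\alpha$, $\alpha\in A$. A subspace $\mathcal P\subseteq\Pi$ is a degree reducing universal interpolation space of order $N$ if for every finite $X\subset\mathbb C^s$ with $\#X\le N$ and every $q\in\Pi$ there is $p\in\mathcal P$ with $p|_X=q|_X$ and $\deg p\le\deg q$. A set $A\subset\Gamma$ is a monomial degree reducing universal interpolation set of order $N$ if $\Pi_A$ is a degree reducing universal interpolation space of order $N$. For $\alpha,\beta\in\Gamma$, $\alpha\le\beta$ means $\alpha_j\le\beta_j$ for all $j$; $B\subset\Gamma$ is a lower set if $\alpha\in B$ and $\beta\le\alpha$ imply $\beta\in B$; $L_j(\Gamma)$ denotes the set of lower sets of cardinality $j$. *)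

theory Defs
  imports Complex_Main
begin

text \<open>Variables are indexed by a finite type 'n, so s = CARD('n) and
  Gamma = N_0^s is the set of all multi-indices 'n \<Rightarrow> nat.
  A polynomial in C[x_1..x_s] is its coefficient function with finite support.\<close>

definition supp :: "(('n::finite \<Rightarrow> nat) \<Rightarrow> complex) \<Rightarrow> ('n \<Rightarrow> nat) set" where
  "supp c = {\<alpha>. c \<alpha> \<noteq> 0}"

definition is_poly :: "(('n::finite \<Rightarrow> nat) \<Rightarrow> complex) \<Rightarrow> bool" where
  "is_poly c \<longleftrightarrow> finite (supp c)"

definition monomial_eval :: "('n::finite \<Rightarrow> nat) \<Rightarrow> ('n \<Rightarrow> complex) \<Rightarrow> complex" where
  "monomial_eval \<alpha> x = (\<Prod>i\<in>UNIV. x i ^ \<alpha> i)"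

definition peval :: "(('n::finite \<Rightarrow> nat) \<Rightarrow> complex) \<Rightarrow> ('n \<Rightarrow> complex) \<Rightarrow> complex" where
  "peval c x = (\<Sum>\<alpha>\<in>supp c. c \<alpha> * monomial_eval \<alpha> x)"

definition tdeg :: "('n::finite \<Rightarrow> nat) \<Rightarrow> nat" where
  "tdeg \<alpha> = (\<Sum>i\<in>UNIV. \<alpha> i)"

definition pdeg :: "(('n::finite \<Rightarrow> nat) \<Rightarrow> complex) \<Rightarrow> int" where
  "pdeg c = (if supp c = {} then -1 else int (Max (tdeg ` supp c)))"

definition Pi_set :: "('n::finite \<Rightarrow> nat) set \<Rightarrow> (('n \<Rightarrow> nat) \<Rightarrow> complex) set" where
  "Pi_set A = {c. is_poly c \<and> supp c \<subseteq> A}"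

definition deg_red_univ_interp_space ::
  "(('n::finite \<Rightarrow> nat) \<Rightarrow> complex) set \<Rightarrow> nat \<Rightarrow> bool" where
  "deg_red_univ_interp_space P N \<longleftrightarrow>
     (\<forall>X :: ('n \<Rightarrow> complex) set. finite X \<and> card X \<le> N \<longrightarrow>
       (\<forall>q. is_poly q \<longrightarrow>
          (\<exists>p\<in>P. (\<forall>x\<in>X. peval p x = peval q x) \<and> pdeg p \<le> pdeg q)))"

definition monomial_druis :: "('n::finite \<Rightarrow> nat) set \<Rightarrow> nat \<Rightarrow> bool" where
  "monomial_druis A N \<longleftrightarrow> deg_red_univ_interp_space (Pi_set A) N"

definition lower_set :: "('n::finite \<Rightarrow> nat) set \<Rightarrow> bool" where
  "lower_set B \<longleftrightarrow> (\<forall>\<alpha>\<in>B. \<forall>\<beta>. (\<forall>j. \<beta> j \<le> \<alpha> j) \<longrightarrow> \<beta> \<in> B)"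

end

theory Submission imports Defs "HOL-Library.FuncSet" "HOL-Library.Real_Mod" begin

text \<open>Suppose \<alpha> lies in a lower set B with #B \<le> N but \<alpha> \<notin> A. Then B contains the box
  {\<beta>. \<beta> \<le> \<alpha>}, and we interpolate x^\<alpha> on the grid X of points
  (w_1^\<beta>_1, ..., w_s^\<beta>_s), \<beta> \<le> \<alpha>, where w_i is a primitive (\<alpha>_i+1)-st root of unity;
  #X \<le> N. The discrete Fourier coefficient of index \<alpha> on X is nonzero on x^\<alpha> but vanishes on
  every monomial x^\<gamma> with \<gamma>_i < \<alpha>_i for some i, which includes every \<gamma> \<noteq> \<alpha> with
  |\<gamma>| \<le> |\<alpha>|. A degree reducing interpolant from \<Pi>_A would consist of such monomials only,
  yet agree with x^\<alpha> on X.\<close>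

definition unit_root :: "nat \<Rightarrow> complex" where
  "unit_root m = cis (2 * pi / real m)"

lemma unit_root_power_self: "0 < m \<Longrightarrow> unit_root m ^ m = 1"
  by (simp add: unit_root_def DeMoivre)

lemma unit_root_power_ne_1:
  assumes "0 < j" "j < m"
  shows "unit_root m ^ j \<noteq> 1"
proof
  assume "unit_root m ^ j = 1"
  hence "cis (real j * (2 * pi / m)) = 1" by (simp add: unit_root_def DeMoivre)
  then obtain n :: int where "real j * (2 * pi / m) = of_int n * (2 * pi)"
    by (auto simp: cis_eq_1_iff)
  hence "real j = of_int n * real m" using assms by (simp add: field_simps)
  hence "int j = n * int m" by (metis of_int_eq_iff of_int_mult of_int_of_nat_eq)
  thus False using assms
    by (metis dvd_triv_right less_imp_le_nat nat_dvd_not_less of_nat_0_less_iff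
        int_dvd_int_iff dvd_def mult.commute)
qed

lemma sum_unit_root_powers:
  assumes "0 < j" "j \<le> m"
  shows "(\<Sum>b<m. (unit_root m ^ j) ^ b) = (if j = m then of_nat m else 0)"
proof (cases "j = m")
  case True
  thus ?thesis using assms unit_root_power_self by simp
next
  case False
  have "(unit_root m ^ j) ^ m = 1"
    using assms unit_root_power_self by (metis power_mult mult.commute power_one not_gr0 le_zero_eq)
  moreover have "unit_root m ^ j \<noteq> 1" using assms False by (intro unit_root_power_ne_1) auto
  ultimately show ?thesis using False by (simp add: sum_gp_strict)
qed

definition box :: "('n::finite \<Rightarrow> nat) \<Rightarrow> ('n \<Rightarrow> nat) set" where
  "box \<alpha> = PiE UNIV (\<lambda>i. {..\<alpha> i})"

lemma mem_box_iff: "\<beta> \<in> box \<alpha> \<longleftrightarrow> (\<forall>i. \<beta> i \<le> \<alpha> i)"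
  by (simp add: box_def PiE_iff)

lemma finite_box: "finite (box \<alpha>)"
  by (simp add: box_def finite_PiE)

lemma card_box: "card (box \<alpha>) = (\<Prod>i\<in>UNIV. Suc (\<alpha> i))"
  by (simp add: box_def card_PiE)

lemma box_subset_lower_set: "lower_set B \<Longrightarrow> \<alpha> \<in> B \<Longrightarrow> box \<alpha> \<subseteq> B"
  by (auto simp: lower_set_def mem_box_iff)

definition grid_root :: "('n::finite \<Rightarrow> nat) \<Rightarrow> 'n \<Rightarrow> complex" where
  "grid_root \<alpha> i = unit_root (Suc (\<alpha> i))"

definition grid_point :: "('n::finite \<Rightarrow> nat) \<Rightarrow> ('n \<Rightarrow> nat) \<Rightarrow> 'n \<Rightarrow> complex" where
  "grid_point \<alpha> \<beta> i = grid_root \<alpha> i ^ \<beta> i"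

definition fourier_coeff :: "('n::finite \<Rightarrow> nat) \<Rightarrow> (('n \<Rightarrow> complex) \<Rightarrow> complex) \<Rightarrow> complex" where
  "fourier_coeff \<alpha> f = (\<Sum>\<beta>\<in>box \<alpha>. monomial_eval \<beta> (grid_root \<alpha>) * f (grid_point \<alpha> \<beta>))"

lemma fourier_coeff_monomial:
  "fourier_coeff \<alpha> (monomial_eval \<gamma>) =
     (\<Prod>i\<in>UNIV. \<Sum>b<Suc (\<alpha> i). (grid_root \<alpha> i ^ Suc (\<gamma> i)) ^ b)"
proof -
  have "fourier_coeff \<alpha> (monomial_eval \<gamma>) =
      (\<Sum>\<beta>\<in>box \<alpha>. \<Prod>i\<in>UNIV. (grid_root \<alpha> i ^ Suc (\<gamma> i)) ^ \<beta> i)"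
    unfolding fourier_coeff_def monomial_eval_def grid_point_def
    by (intro sum.cong refl)
      (simp add: prod.distrib[symmetric] power_mult[symmetric] power_mult_distrib mult.commute)
  also have "\<dots> = (\<Prod>i\<in>UNIV. \<Sum>b\<in>{..\<alpha> i}. (grid_root \<alpha> i ^ Suc (\<gamma> i)) ^ b)"
    unfolding box_def by (rule prod_sum_PiE[symmetric]) auto
  finally show ?thesis by (simp add: lessThan_Suc_atMost)
qed

lemma fourier_coeff_monomial_self_ne_0: "fourier_coeff \<alpha> (monomial_eval \<alpha>) \<noteq> 0"
  unfolding fourier_coeff_monomial grid_root_def
  by (subst sum_unit_root_powers) (auto simp del: of_nat_Suc)

lemma fourier_coeff_monomial_eq_0:
  assumes "\<gamma> i < \<alpha> i"
  shows "fourier_coeff \<alpha> (monomial_eval \<gamma>) = 0"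
proof -
  have "(\<Sum>b<Suc (\<alpha> i). (grid_root \<alpha> i ^ Suc (\<gamma> i)) ^ b) = 0"
    unfolding grid_root_def using assms by (subst sum_unit_root_powers) auto
  thus ?thesis unfolding fourier_coeff_monomial by (intro prod_zero) auto
qed

lemma fourier_coeff_peval:
  "fourier_coeff \<alpha> (peval p) = (\<Sum>\<gamma>\<in>supp p. p \<gamma> * fourier_coeff \<alpha> (monomial_eval \<gamma>))"
  unfolding fourier_coeff_def peval_def
  by (simp add: sum_distrib_left sum_distrib_right mult_ac sum.swap[of _ "box \<alpha>"])

lemma tdeg_le_pdeg: "is_poly p \<Longrightarrow> \<gamma> \<in> supp p \<Longrightarrow> int (tdeg \<gamma>) \<le> pdeg p"
  by (auto simp: pdeg_def is_poly_def)

lemma pdeg_monomial: "supp p = {\<alpha>} \<Longrightarrow> pdeg p = int (tdeg \<alpha>)"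
  by (simp add: pdeg_def)

lemma exists_less_if_tdeg_le:
  assumes "tdeg \<gamma> \<le> tdeg \<alpha>" "\<gamma> \<noteq> \<alpha>"
  shows "\<exists>i. \<gamma> i < \<alpha> i"
proof (rule ccontr)
  assume "\<nexists>i. \<gamma> i < \<alpha> i"
  hence ge: "\<forall>i. \<alpha> i \<le> \<gamma> i" by (simp add: not_less)
  with assms(2) obtain j where "\<alpha> j < \<gamma> j" by (metis ext le_neq_implies_less)
  hence "tdeg \<alpha> < tdeg \<gamma>" unfolding tdeg_def using ge by (intro sum_strict_mono_ex1) auto
  with assms(1) show False by simp
qed

lemma monomial_druis_mem:
  fixes \<alpha> :: "'n::finite \<Rightarrow> nat"
  assumes "monomial_druis A N" "(\<Prod>i\<in>UNIV. Suc (\<alpha> i)) \<le> N"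
  shows "\<alpha> \<in> A"
proof (rule ccontr)
  assume "\<alpha> \<notin> A"
  define X where "X = grid_point \<alpha> ` box \<alpha>"
  have "finite X" by (simp add: X_def finite_box)
  have "card X \<le> card (box \<alpha>)" unfolding X_def by (rule card_image_le[OF finite_box])
  hence "card X \<le> N" using assms(2) by (simp add: card_box)
  define q :: "('n \<Rightarrow> nat) \<Rightarrow> complex" where "q = (\<lambda>\<gamma>. if \<gamma> = \<alpha> then 1 else 0)"
  have supp_q: "supp q = {\<alpha>}" by (auto simp: supp_def q_def)
  have peval_q: "peval q = monomial_eval \<alpha>"
    unfolding peval_def supp_q by (simp add: q_def)
  have "is_poly q" by (simp add: is_poly_def supp_q)
  with assms(1) \<open>finite X\<close> \<open>card X \<le> N\<close> obtain p where
    p: "p \<in> Pi_set A" "\<forall>x\<in>X. peval p x = peval q x" "pdeg p \<le> pdeg q"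
    unfolding monomial_druis_def deg_red_univ_interp_space_def by blast
  have "fourier_coeff \<alpha> (monomial_eval \<gamma>) = 0" if "\<gamma> \<in> supp p" for \<gamma>
  proof -
    have "tdeg \<gamma> \<le> tdeg \<alpha>"
      using tdeg_le_pdeg[OF _ that] p(1,3) pdeg_monomial[OF supp_q] by (simp add: Pi_set_def)
    moreover have "\<gamma> \<noteq> \<alpha>" using that p(1) \<open>\<alpha> \<notin> A\<close> by (auto simp: Pi_set_def)
    ultimately show ?thesis using exists_less_if_tdeg_le fourier_coeff_monomial_eq_0 by metis
  qed
  hence "fourier_coeff \<alpha> (peval p) = 0" by (simp add: fourier_coeff_peval)
  moreover have "fourier_coeff \<alpha> (peval p) = fourier_coeff \<alpha> (peval q)"
    unfolding fourier_coeff_def using p(2) X_def by (intro sum.cong) auto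
  ultimately show False using peval_q fourier_coeff_monomial_self_ne_0 by metis
qed

theorem theorem18:
  fixes A :: "('n::finite \<Rightarrow> nat) set" and N :: nat
  assumes "N \<ge> 1"
    and "monomial_druis A N"
  shows "\<Union> {B. lower_set B \<and> finite B \<and> 1 \<le> card B \<and> card B \<le> N} \<subseteq> A"
proof
  fix \<alpha> :: "'n \<Rightarrow> nat" assume "\<alpha> \<in> \<Union> {B. lower_set B \<and> finite B \<and> 1 \<le> card B \<and> card B \<le> N}"
  then obtain B where B: "lower_set B" "finite B" "card B \<le> N" "\<alpha> \<in> B" by auto
  have "(\<Prod>i\<in>UNIV. Suc (\<alpha> i)) = card (box \<alpha>)" by (simp add: card_box)
  also have "\<dots> \<le> card B" using B by (intro card_mono box_subset_lower_set)
  also have "\<dots> \<le> N" using B(3) .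
  finally show "\<alpha> \<in> A" by (rule monomial_druis_mem[OF assms(2)])
qed

end
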